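(* With the notation of the context, the joint distribution of $(\bar M,T,X,Z,R)$ satisfies $\widetilde p_{\bar M\,T\,X\,Z\,R}=\widetilde q_{\bar M\,T\,X\,Z\,R}$, where $$\widetilde q_{\bar M TXZR}(\bar m,t,x,z,\rho)\triangleq \widetilde p_{XZ|T}(x,z|t)\,2^{-n}\,|\mathcal{R}|^{-1}\,\mathds{1}\{\bar m=F(\rho,t)\},$$ i.e., under $\widetilde q$, $T$ is uniform on $\{0,1\}^n$, $R$ is uniform on $\mathcal{R}$ and independent of $T$, $(X,Z)$ is generated from $T$ by $\widetilde p_{XZ|T}$, and $\bar M=F(R,T)$.
   Context: Let $n\geq r$ be positive integers and identify $\{0,1\}^n$ with the finite field $\mathrm{GF}(2^n)$ (via a fixed basis); $\odot$ denotes field multiplication, $\|$ concatenation of bit strings. Let $\mathcal{R}=\{0,1\}^n\setminus\{\mathbf 0\}$. Let $\bar M$ be uniform on $\{0,1\}^r$, $R$ uniform on $\mathcal{R}$, $R'$ uniform on $\{0,1\}^{n-r}$, mutually independent, and define $T=R^{-1}\odot(\bar M\|R')$. Let $(X,Z)$ be random variables generated from $T$ through a conditional distribution $\widetilde p_{XZ|T}$ (in the paper, the one induced by the sub-block encoder and the eavesdropper's channel), conditionally independent of $(\bar M,R,R')$ given $T$; $\widetilde p$ denotes the resulting joint distribution. Define $F:\mathcal{R}\times\{0,1\}^n\to\{0,1\}^r$ by $F(\rho,t)=(\rho\odot t)|_{1:r}$, the leftmost $r$ bits of $\rho\odot t$. *)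

theory Defs
  imports "HOL-Probability.Probability"
begin

text \<open>Bit strings of length n are bool lists; the field GF(2^n) is an abstract finite field type
  'f with 2^n elements, identified with bit strings via a bijection enc (fixed basis).\<close>

definition Fmap :: "('f::field \<Rightarrow> bool list) \<Rightarrow> nat \<Rightarrow> 'f \<Rightarrow> 'f \<Rightarrow> bool list" where
  "Fmap enc r \<rho> t = take r (enc (\<rho> * t))"

definition ptilde :: "('f::{field,finite} \<Rightarrow> bool list) \<Rightarrow> nat \<Rightarrow> nat \<Rightarrow> ('f \<Rightarrow> ('x \<times> 'z) pmf)
    \<Rightarrow> (bool list \<times> 'f \<times> 'x \<times> 'z \<times> 'f) pmf" where
  "ptilde enc n r W =
     do { m \<leftarrow> pmf_of_set {xs. length xs = r};
          \<rho> \<leftarrow> pmf_of_set (UNIV - {0});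
          r' \<leftarrow> pmf_of_set {xs. length xs = n - r};
          let t = inverse \<rho> * inv enc (m @ r');
          xz \<leftarrow> W t;
          return_pmf (m, t, fst xz, snd xz, \<rho>) }"

end

theory Submission
  imports Defs
begin

(* For fixed \<rho> \<noteq> 0, the map (m, r') \<mapsto> \<rho>\<^sup>-\<^sup>1 (m \<parallel> r') is a bijection from {0,1}^r \<times> {0,1}^(n-r)
   onto the field, with inverse t \<mapsto> (F(\<rho>,t), last n - r bits of \<rho> t). Hence, given R = \<rho>, T is
   uniform and M = F(\<rho>,T); this is the distribution q~ below. *)

lemma finite_lists_length_eq_UNIV: "finite {xs::'a::finite list. length xs = k}"
  using finite_lists_length_eq[of "UNIV :: 'a set" k] by simp

lemma pmf_of_set_lists_length_add:
  "pmf_of_set {zs::'a::finite list. length zs = a + b} =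
     do { xs \<leftarrow> pmf_of_set {xs. length xs = a};
          ys \<leftarrow> pmf_of_set {ys. length ys = b};
          return_pmf (xs @ ys) }"
proof -
  let ?L = "\<lambda>k. {xs::'a list. length xs = k}"
  have split: "?L (a + b) = (\<Union>xs\<in>?L a. (@) xs ` ?L b)"
  proof (intro equalityI subsetI)
    fix zs assume "zs \<in> ?L (a + b)"
    then show "zs \<in> (\<Union>xs\<in>?L a. (@) xs ` ?L b)"
      by (intro UN_I[of "take a zs"] image_eqI[of _ _ "drop a zs"]) auto
  qed auto
  have "pmf_of_set (\<Union>xs\<in>?L a. (@) xs ` ?L b) =
      do { xs \<leftarrow> pmf_of_set (?L a); pmf_of_set ((@) xs ` ?L b) }"
    by (rule pmf_of_set_UN[where n = "card (?L b)"])
      (auto simp: finite_lists_length_eq_UNIV Ex_list_of_length card_image inj_on_def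
        disjoint_family_on_def)
  moreover have "pmf_of_set ((@) xs ` ?L b) = map_pmf ((@) xs) (pmf_of_set (?L b))" for xs
    by (rule map_pmf_of_set_inj[symmetric])
      (simp_all add: finite_lists_length_eq_UNIV Ex_list_of_length inj_on_def)
  ultimately show ?thesis
    by (simp add: split map_pmf_def)
qed

lemma nonzero_elements_nonempty: "UNIV - {0::'a::zero_neq_one} \<noteq> {}"
  using one_neq_zero by (metis DiffI UNIV_I empty_iff singletonD)

lemma bij_mult_left:
  fixes c :: "'a::field"
  assumes "c \<noteq> 0" shows "bij ((*) c)"
  using assms by (intro bij_betwI[where g = "(*) (inverse c)"]) auto

definition qtilde :: "('f::{field,finite} \<Rightarrow> bool list) \<Rightarrow> nat \<Rightarrow> ('f \<Rightarrow> ('x \<times> 'z) pmf)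
    \<Rightarrow> (bool list \<times> 'f \<times> 'x \<times> 'z \<times> 'f) pmf" where
  "qtilde enc r W =
     do { \<rho> \<leftarrow> pmf_of_set (UNIV - {0});
          t \<leftarrow> pmf_of_set UNIV;
          xz \<leftarrow> W t;
          return_pmf (Fmap enc r \<rho> t, t, fst xz, snd xz, \<rho>) }"

lemma pmf_map_pmf_pair_into_tuple:
  "pmf (map_pmf (\<lambda>xz. (m', t', fst xz, snd xz, \<rho>')) p) (m, t, x, z, \<rho>) =
     (if m' = m \<and> t' = t \<and> \<rho>' = \<rho> then pmf p (x, z) else 0)"
proof -
  have "(\<lambda>xz. (m', t', fst xz, snd xz, \<rho>')) -` {(m, t, x, z, \<rho>)} =
      (if m' = m \<and> t' = t \<and> \<rho>' = \<rho> then {(x, z)} else {})"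
    by (auto simp: prod_eq_iff)
  then show ?thesis
    by (simp add: pmf_map measure_pmf_single)
qed

lemma pmf_bind_pmf_of_set_concentrated:
  assumes "finite A" "A \<noteq> {}" "\<And>a. a \<in> A \<Longrightarrow> a \<noteq> a\<^sub>0 \<Longrightarrow> x \<notin> set_pmf (f a)"
  shows "pmf (pmf_of_set A \<bind> f) x = indicator A a\<^sub>0 * pmf (f a\<^sub>0) x / card A"
proof -
  have "(\<Sum>a\<in>A. pmf (f a) x) = (\<Sum>a\<in>A. if a = a\<^sub>0 then pmf (f a\<^sub>0) x else 0)"
    by (rule sum.cong) (auto simp: assms(3) pmf_eq_0_set_pmf)
  then show ?thesis
    using assms(1,2) by (simp add: pmf_bind_pmf_of_set indicator_def)
qed

lemma pmf_qtilde:
  fixes enc :: "'f::{field,finite} \<Rightarrow> bool list"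
  shows "pmf (qtilde enc r W) (m, t, x, z, \<rho>) =
     (if \<rho> \<noteq> 0 \<and> m = Fmap enc r \<rho> t
      then pmf (W t) (x, z) / (CARD('f) * card (UNIV - {0::'f})) else 0)"
proof -
  define law_given_RT where
    "law_given_RT \<rho>' t' = map_pmf (\<lambda>xz. (Fmap enc r \<rho>' t', t', fst xz, snd xz, \<rho>')) (W t')"
    for \<rho>' t'
  define law_given_R where "law_given_R \<rho>' = pmf_of_set UNIV \<bind> law_given_RT \<rho>'" for \<rho>'
  have "pmf (qtilde enc r W) (m, t, x, z, \<rho>) =
      indicator (UNIV - {0}) \<rho> * pmf (law_given_R \<rho>) (m, t, x, z, \<rho>) / card (UNIV - {0::'f})"
    unfolding qtilde_def map_pmf_def[symmetric] law_given_RT_def[symmetric]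
      law_given_R_def[symmetric]
    by (rule pmf_bind_pmf_of_set_concentrated)
      (use nonzero_elements_nonempty in \<open>auto simp: law_given_R_def law_given_RT_def\<close>)
  also have "pmf (law_given_R \<rho>) (m, t, x, z, \<rho>) =
      pmf (law_given_RT \<rho> t) (m, t, x, z, \<rho>) / CARD('f)"
    unfolding law_given_R_def
    by (subst pmf_bind_pmf_of_set_concentrated[where a\<^sub>0 = t]) (auto simp: law_given_RT_def)
  finally show ?thesis
    by (simp add: law_given_RT_def pmf_map_pmf_pair_into_tuple indicator_def)
qed

lemma ptilde_eq_qtilde:
  fixes enc :: "'f::{field,finite} \<Rightarrow> bool list"
  assumes bij: "bij_betw enc UNIV {xs. length xs = n}" and "r \<le> n"
  shows "ptilde enc n r W = qtilde enc r W"
proof -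
  let ?L = "\<lambda>k. pmf_of_set {xs::bool list. length xs = k}"
  let ?U = "pmf_of_set (UNIV - {0::'f})"
  define g where "g \<rho> s = (let t = inverse \<rho> * inv enc s in
      map_pmf (\<lambda>xz. (take r s, t, fst xz, snd xz, \<rho>)) (W t))" for \<rho> s
  have "ptilde enc n r W = do { m \<leftarrow> ?L r; \<rho> \<leftarrow> ?U; r' \<leftarrow> ?L (n - r); g \<rho> (m @ r') }"
    unfolding ptilde_def g_def map_pmf_def
    by (intro bind_pmf_cong refl) (simp_all add: finite_lists_length_eq_UNIV Ex_list_of_length)
  also have "\<dots> = do { \<rho> \<leftarrow> ?U; s \<leftarrow> ?L n; g \<rho> s }"
  proof -
    have "?L n = do { xs \<leftarrow> ?L r; ys \<leftarrow> ?L (n - r); return_pmf (xs @ ys) }"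
      using pmf_of_set_lists_length_add[of r "n - r"] \<open>r \<le> n\<close> by simp
    then show ?thesis
      by (subst bind_commute_pmf) (simp add: bind_assoc_pmf bind_return_pmf)
  qed
  also have "\<dots> = qtilde enc r W"
    unfolding qtilde_def map_pmf_def[symmetric]
  proof (intro bind_pmf_cong refl)
    fix \<rho> :: 'f assume "\<rho> \<in> set_pmf ?U"
    then have "\<rho> \<noteq> 0"
      using set_pmf_of_set[OF nonzero_elements_nonempty[where 'a = 'f] finite] by simp
    then have "bij_betw (\<lambda>t. enc (\<rho> * t)) UNIV {xs. length xs = n}"
      using bij_betw_trans[OF bij_mult_left bij] by (simp add: comp_def)
    then have "?L n = map_pmf (\<lambda>t. enc (\<rho> * t)) (pmf_of_set UNIV)"
      by (simp add: map_pmf_of_set_bij_betw)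
    moreover have
      "g \<rho> (enc (\<rho> * t)) = map_pmf (\<lambda>xz. (Fmap enc r \<rho> t, t, fst xz, snd xz, \<rho>)) (W t)" for t
      using \<open>\<rho> \<noteq> 0\<close> bij_betw_inv_into_left[OF bij]
      by (simp add: g_def Fmap_def field_simps)
    ultimately show "?L n \<bind> g \<rho> =
        pmf_of_set UNIV \<bind> (\<lambda>t. map_pmf (\<lambda>xz. (Fmap enc r \<rho> t, t, fst xz, snd xz, \<rho>)) (W t))"
      by (simp add: bind_map_pmf)
  qed
  finally show ?thesis .
qed

theorem lemma4:
  fixes enc :: "'f::{field,finite} \<Rightarrow> bool list"
    and n r :: nat
    and W :: "'f \<Rightarrow> ('x \<times> 'z) pmf"
  assumes card: "CARD('f) = 2 ^ n"
    and bij: "bij_betw enc UNIV {xs. length xs = n}"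
    and lin: "\<forall>a b. enc (a + b) = map2 (\<noteq>) (enc a) (enc b)"
    and r_pos: "0 < r" and rn: "r \<le> n"
  shows "\<forall>m t x z \<rho>. pmf (ptilde enc n r W) (m, t, x, z, \<rho>) =
     (if \<rho> \<noteq> 0 then
        pmf (W t) (x, z) * (1 / 2 ^ n) * (1 / real (card (UNIV - {0::'f})))
          * (if m = Fmap enc r \<rho> t then 1 else 0)
      else 0)"
  using card by (simp add: ptilde_eq_qtilde[OF bij rn] pmf_qtilde)

end
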